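(* Let $N\ge1$, let $n\ge m$ be positive integers and $\kappa>0$. Let $\{(U_j,V_j)\}_{j=1}^N$ be a solution of the homogeneous double special orthogonal matrix model $$\dot U_j=\frac{\kappa}{N}\sum_{k=1}^N\langle V_j,V_k\rangle_F\,(U_k-U_jU_k^\top U_j),\qquad \dot V_j=\frac{\kappa}{N}\sum_{k=1}^N\langle U_j,U_k\rangle_F\,(V_k-V_jV_k^\top V_j),$$ with $(U_j,V_j)(0)=(U_j^0,V_j^0)\in\mathbf{SO}(n)\times\mathbf{SO}(m)$. Suppose $$\mathcal L(0)<\alpha_{m,n}:=\frac{-(12n+27)+\sqrt{(12n+27)^2+24m(3n+4)}}{4(4n+3)}.$$ Then $\lim_{t\to\infty}\mathcal L(t)=0$.
   Context: For real matrices, $\langle A,B\rangle_F=\mathrm{tr}(A^\top B)$ and $\|A\|_F=\sqrt{\langle A,A\rangle_F}$. $\mathbf{SO}(n)$ is the special orthogonal group. For a solution, set $d_{ij}=\langle U_i,U_j\rangle_F$, $c_{ij}=\langle V_i,V_j\rangle_F$, $\mathcal D(\mathcal U)=\max_{i,j}\|U_i-U_j\|_F$, $\mathcal D(\mathcal V)=\max_{i,j}\|V_i-V_j\|_F$, $\mathcal S(\mathcal U)=\max_{i,j}|n-d_{ij}|$, $\mathcal S(\mathcal V)=\max_{i,j}|m-c_{ij}|$, and $\mathcal L=\mathcal D(\mathcal U)+\mathcal D(\mathcal V)+\mathcal S(\mathcal U)+\mathcal S(\mathcal V)$. *)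

theory Defs
  imports "HOL-Analysis.Analysis"
begin

definition frob_inner :: "real^'n::finite^'n \<Rightarrow> real^'n^'n \<Rightarrow> real" where
  "frob_inner A B = trace (transpose A ** B)"

definition frob_norm :: "real^'n::finite^'n \<Rightarrow> real" where
  "frob_norm A = sqrt (frob_inner A A)"

definition SO_mat :: "real^'n::finite^'n \<Rightarrow> bool" where
  "SO_mat A \<longleftrightarrow> orthogonal_matrix A \<and> det A = 1"

definition DSOM_solution ::
  "real \<Rightarrow> ('k::finite \<Rightarrow> real \<Rightarrow> real^'n::finite^'n) \<Rightarrow> ('k \<Rightarrow> real \<Rightarrow> real^'m::finite^'m) \<Rightarrow> bool" where
  "DSOM_solution \<kappa> U V \<longleftrightarrow>
     (\<forall>j. \<forall>t\<ge>0.
        (U j has_vector_derivative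
           ((\<kappa> / real CARD('k)) *\<^sub>R
              (\<Sum>k\<in>UNIV. frob_inner (V j t) (V k t) *\<^sub>R
                   (U k t - U j t ** transpose (U k t) ** U j t)))) (at t within {0..})
      \<and> (V j has_vector_derivative
           ((\<kappa> / real CARD('k)) *\<^sub>R
              (\<Sum>k\<in>UNIV. frob_inner (U j t) (U k t) *\<^sub>R
                   (V k t - V j t ** transpose (V k t) ** V j t)))) (at t within {0..}))"

definition diamD :: "('k::finite \<Rightarrow> real^'n::finite^'n) \<Rightarrow> real" where
  "diamD U = Max {frob_norm (U i - U j) | i j. True}"

definition devS :: "('k::finite \<Rightarrow> real^'n::finite^'n) \<Rightarrow> real" where
  "devS U = Max {\<bar>real CARD('n) - frob_inner (U i) (U j)\<bar> | i j. True}"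

definition lyapL ::
  "('k::finite \<Rightarrow> real \<Rightarrow> real^'n::finite^'n) \<Rightarrow> ('k \<Rightarrow> real \<Rightarrow> real^'m::finite^'m) \<Rightarrow> real \<Rightarrow> real" where
  "lyapL U V t = diamD (\<lambda>j. U j t) + diamD (\<lambda>j. V j t) + devS (\<lambda>j. U j t) + devS (\<lambda>j. V j t)"

definition alpha_mn :: "real \<Rightarrow> real \<Rightarrow> real" where
  "alpha_mn m n = (-(12*n+27) + sqrt ((12*n+27)^2 + 24*m*(3*n+4))) / (4*(4*n+3))"

end

theory Submission
  imports Defs
begin

text \<open>Along the flow every \<open>U\<^sub>j\<close>, \<open>V\<^sub>j\<close> stays orthogonal: the Gram defect \<open>X\<^sup>T X - 1\<close> obeys a
  linear ODE and vanishes initially (Gronwall). For orthogonal matrices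
  \<open>\<langle>U\<^sub>i, U\<^sub>j\<rangle> = n - \<parallel>U\<^sub>i - U\<^sub>j\<parallel>\<^sup>2 / 2\<close>, so \<open>L\<close> is controlled by the two diameters.
  If \<open>(i, j)\<close> realises the diameter of the \<open>U\<close>-configuration and both diameters are at
  most \<open>1/5\<close>, the coupling forces \<open>d/dt \<parallel>U\<^sub>i - U\<^sub>j\<parallel>\<^sup>2 \<le> -2\<kappa> \<parallel>U\<^sub>i - U\<^sub>j\<parallel>\<^sup>2\<close>; the key
  estimate is \<open>\<parallel>U\<^sub>j\<^sup>T U\<^sub>i - U\<^sub>i\<^sup>T U\<^sub>j\<parallel>\<^sup>2 \<ge> 4r\<^sup>2 - r\<^sup>4\<close> for \<open>r = \<parallel>U\<^sub>i - U\<^sub>j\<parallel>\<close>.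
  A first-crossing argument for the finite family of all \<open>exp(\<kappa>t) \<parallel>U\<^sub>i - U\<^sub>j\<parallel>\<^sup>2\<close> and
  \<open>exp(\<kappa>t) \<parallel>V\<^sub>i - V\<^sub>j\<parallel>\<^sup>2\<close> then keeps them below \<open>1/25\<close> forever, so \<open>L(t) = O(exp(-\<kappa>t/2))\<close>.\<close>

section \<open>Frobenius calculus for real matrices\<close>

lemma transpose_add: "transpose (A + B) = transpose A + transpose (B::'a::semiring_1^'n^'m)"
  by (simp add: transpose_def vec_eq_iff)

lemma transpose_diff: "transpose (A - B) = transpose A - transpose (B::'a::ring_1^'n^'m)"
  by (simp add: transpose_def vec_eq_iff)

lemma transpose_sum: "transpose (sum f S) = (\<Sum>k\<in>S. transpose (f k :: 'a::semiring_1^'n^'m))"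
  by (induction S rule: infinite_finite_induct) (auto simp: transpose_add transpose_def vec_eq_iff)

lemma matrix_add_rdistrib: "(A + B) ** C = A ** C + B ** (C::'a::semiring_1^'p^'n)"
  by (vector matrix_matrix_mult_def sum.distrib[symmetric] field_simps)

lemma matrix_diff_ldistrib: "A ** (B - C) = A ** B - A ** (C::'a::ring_1^'p^'n)"
  by (vector matrix_matrix_mult_def sum_subtractf[symmetric] field_simps)

lemma matrix_diff_rdistrib: "(A - B) ** C = A ** C - B ** (C::'a::ring_1^'p^'n)"
  by (vector matrix_matrix_mult_def sum_subtractf[symmetric] field_simps)

lemma matrix_sum_ldistrib: "(A::'a::semiring_1^'n^'m) ** sum f S = (\<Sum>k\<in>S. A ** f k)"
  by (induction S rule: infinite_finite_induct) (auto simp: matrix_add_ldistrib)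

lemma matrix_sum_rdistrib: "sum f S ** (A::'a::semiring_1^'p^'n) = (\<Sum>k\<in>S. f k ** A)"
  by (induction S rule: infinite_finite_induct) (auto simp: matrix_add_rdistrib)

lemma matrix_scaleR_right: "(A::real^'n^'m) ** (c *\<^sub>R B) = c *\<^sub>R (A ** B)"
  by (simp add: matrix_scalar_ac scalar_matrix_assoc)

lemma matrix_scaleR_left: "(c *\<^sub>R A) ** (B::real^'p^'n) = c *\<^sub>R (A ** B)"
  by (simp add: scalar_matrix_assoc)

lemma inner_matrix_eq: "inner (A::real^'n^'m) B = (\<Sum>i\<in>UNIV. \<Sum>j\<in>UNIV. A$i$j * B$i$j)"
  by (simp add: inner_vec_def)

lemma frob_inner_eq_inner: "frob_inner A B = inner A B"
  unfolding frob_inner_def trace_def inner_matrix_eq matrix_matrix_mult_def transpose_def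
  by simp (rule sum.swap)

lemma frob_norm_eq_norm: "frob_norm A = norm A"
  by (simp add: frob_norm_def frob_inner_eq_inner norm_eq_sqrt_inner)

lemma inner_transpose: "inner (transpose (A::real^'n^'m)) (transpose B) = inner A B"
  unfolding inner_matrix_eq transpose_def by simp (rule sum.swap)

lemma norm_transpose: "norm (transpose (A::real^'n^'m)) = norm A"
  by (simp add: norm_eq_sqrt_inner inner_transpose)

lemma inner_matrix_mult_right: "inner ((A::real^'n^'m) ** B) (C::real^'p^'m) = inner A (C ** transpose B)"
  unfolding inner_matrix_eq matrix_matrix_mult_def transpose_def
  by (simp add: sum_distrib_left sum_distrib_right mult_ac) (rule sum.cong[OF refl], rule sum.swap)

lemma inner_matrix_mult_left: "inner ((A::real^'n^'m) ** B) (C::real^'p^'m) = inner B (transpose A ** C)"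
proof -
  have "inner (A ** B) C = inner (transpose B ** transpose A) (transpose C)"
    by (simp add: inner_transpose flip: matrix_transpose_mul)
  also have "\<dots> = inner (transpose B) (transpose (transpose A ** C))"
    by (simp add: inner_matrix_mult_right matrix_transpose_mul)
  finally show ?thesis
    by (simp add: inner_transpose)
qed

lemma inner_mat1: "inner (A::real^'n^'n) (mat 1) = trace A"
  unfolding inner_matrix_eq mat_def trace_def by (simp add: if_distrib cong: if_cong)

lemma norm_matrix_mult_le: "norm ((A::real^'n^'m) ** (B::real^'p^'n)) \<le> norm A * norm B"
proof -
  have entry: "(A ** B)$i$j = inner (A$i) (transpose B$j)" for i j
    by (simp add: matrix_matrix_mult_def transpose_def inner_vec_def)
  have "(norm (A ** B))^2 = (\<Sum>i\<in>UNIV. \<Sum>j\<in>UNIV. ((A ** B)$i$j)^2)"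
    unfolding power2_norm_eq_inner by (simp add: inner_matrix_eq power2_eq_square)
  also have "\<dots> = (\<Sum>i\<in>UNIV. \<Sum>j\<in>UNIV. (inner (A$i) (transpose B$j))^2)"
    by (simp only: entry)
  also have "\<dots> \<le> (\<Sum>i\<in>UNIV. \<Sum>j\<in>UNIV. inner (A$i) (A$i) * inner (transpose B$j) (transpose B$j))"
    by (intro sum_mono Cauchy_Schwarz_ineq)
  also have "\<dots> = inner A A * inner (transpose B) (transpose B)"
    by (simp add: inner_vec_def sum_product)
  also have "\<dots> = (norm A * norm B)^2"
    by (simp add: norm_transpose power_mult_distrib flip: power2_norm_eq_inner)
  finally show ?thesis
    by (rule power2_le_imp_le) simp
qed

lemma abs_inner_matrix_mult_le: "\<bar>inner A ((B::real^'n^'m) ** (C::real^'p^'n))\<bar> \<le> norm A * norm B * norm C"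
proof -
  have "\<bar>inner A (B ** C)\<bar> \<le> norm A * norm (B ** C)"
    by (rule Cauchy_Schwarz_ineq2)
  also have "\<dots> \<le> norm A * (norm B * norm C)"
    by (intro mult_left_mono norm_matrix_mult_le norm_ge_zero)
  finally show ?thesis
    by (simp add: mult.assoc)
qed

section \<open>Orthogonal matrices and the coupling drift\<close>

text \<open>For orthogonal \<open>X\<close>, \<open>W - X W\<^sup>T X = X (X\<^sup>T W - W\<^sup>T X)\<close> is twice the orthogonal projection of
  \<open>W\<close> onto the tangent space \<open>X \<cdot> so(n)\<close> of \<open>O(n)\<close> at \<open>X\<close>.\<close>

definition tangent_drift :: "real^'n^'n \<Rightarrow> real^'n^'n \<Rightarrow> real^'n^'n" where
  "tangent_drift X W = W - X ** transpose W ** X"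

definition sync_field ::
  "real \<Rightarrow> ('k::finite \<Rightarrow> real^'n^'n) \<Rightarrow> ('k \<Rightarrow> real^'m^'m) \<Rightarrow> 'k \<Rightarrow> real^'n^'n" where
  "sync_field \<kappa> X Y j =
     (\<kappa> / real CARD('k)) *\<^sub>R (\<Sum>k\<in>UNIV. inner (Y j) (Y k) *\<^sub>R tangent_drift (X j) (X k))"

lemma orthogonal_matrix_inner_self:
  "orthogonal_matrix (Q::real^'n^'n) \<Longrightarrow> inner Q Q = real CARD('n)"
  using inner_matrix_mult_left[of Q "mat 1" Q]
  by (simp add: orthogonal_matrix inner_mat1 trace_I)

lemma norm_orthogonal_matrix_mult:
  assumes "orthogonal_matrix (Q::real^'n^'n)"
  shows "norm (Q ** (A::real^'p^'n)) = norm A"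
proof -
  have "inner (Q ** A) (Q ** A) = inner A A"
    using assms by (simp add: inner_matrix_mult_left matrix_mul_assoc orthogonal_matrix)
  then show ?thesis
    by (simp add: norm_eq_sqrt_inner)
qed

lemma inner_orthogonal_matrices:
  assumes "orthogonal_matrix (P::real^'n^'n)" "orthogonal_matrix Q"
  shows "inner P Q = real CARD('n) - (norm (P - Q))^2 / 2"
proof -
  have "(norm (P - Q))^2 = 2 * real CARD('n) - 2 * inner P Q"
    using assms by (simp add: power2_norm_eq_inner inner_diff_left inner_diff_right
        orthogonal_matrix_inner_self inner_commute)
  then show ?thesis
    by linarith
qed

lemma inner_tangent_drift:
  assumes "orthogonal_matrix (X::real^'n^'n)"
  shows "inner A (tangent_drift X W) = inner (X ** (transpose X ** A - transpose A ** X)) W"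
proof -
  have "X ** (transpose X ** A - transpose A ** X) = A - X ** transpose A ** X"
    using assms by (simp add: matrix_diff_ldistrib matrix_mul_assoc orthogonal_matrix_def)
  moreover have "inner A (X ** transpose W ** X) = inner (X ** transpose A ** X) W"
  proof -
    have "inner (X ** transpose W ** X) A = inner (X ** transpose W) (A ** transpose X)"
      by (rule inner_matrix_mult_right)
    also have "\<dots> = inner (transpose W) (transpose X ** (A ** transpose X))"
      by (rule inner_matrix_mult_left)
    also have "\<dots> = inner W (X ** transpose A ** X)"
      by (metis inner_transpose transpose_transpose matrix_transpose_mul matrix_mul_assoc)
    finally show ?thesis
      by (simp add: inner_commute)
  qed
  ultimately show ?thesis
    by (simp add: tangent_drift_def inner_diff_left inner_diff_right inner_commute)
qed

lemma inner_tangent_drift_self: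
  "orthogonal_matrix (X::real^'n^'n) \<Longrightarrow> inner X (tangent_drift X W) = 0"
  by (simp add: inner_tangent_drift orthogonal_matrix_def)

lemma inner_skew_times_orthogonal_self:
  assumes "orthogonal_matrix (X::real^'n^'n)"
  shows "inner (X ** (transpose Y ** X - transpose X ** Y)) X = 0"
proof -
  have "inner (X ** (transpose Y ** X - transpose X ** Y)) X
      = inner (transpose Y ** X - transpose (transpose Y ** X)) (mat 1)"
    using assms by (simp add: inner_matrix_mult_left orthogonal_matrix matrix_transpose_mul)
  also have "\<dots> = 0"
    by (simp add: inner_mat1 trace_def transpose_def sum_subtractf)
  finally show ?thesis .
qed

lemma inner_skew_times_orthogonal_other:
  assumes "orthogonal_matrix (Y::real^'n^'n)"
  shows "inner (Y ** (transpose Y ** X - transpose X ** Y)) X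
     = (norm (transpose Y ** X - transpose X ** Y))^2 / 2"
proof -
  define P where "P = transpose Y ** X"
  have "transpose X ** Y = transpose P"
    by (simp add: P_def matrix_transpose_mul)
  moreover have "inner (P - transpose P) P = (norm (P - transpose P))^2 / 2"
    by (simp add: power2_norm_eq_inner inner_diff_left inner_diff_right inner_transpose inner_commute)
  ultimately show ?thesis
    by (simp add: inner_matrix_mult_left P_def)
qed

section \<open>Contraction of a widest pair\<close>

lemma norm_skew_part_lower:
  assumes oX: "orthogonal_matrix (X::real^'n^'n)" and oY: "orthogonal_matrix Y"
  shows "4 * (norm (X - Y))^2 - (norm (X - Y))^4 \<le> (norm (transpose Y ** X - transpose X ** Y))^2"
proof -
  define E where "E = transpose Y ** X - mat 1"
  have "transpose (transpose Y ** X) ** (transpose Y ** X) = mat 1"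
    using oX oY by (metis orthogonal_matrix orthogonal_matrix_mul orthogonal_matrix_transpose)
  \<comment> \<open>orthogonality of \<open>Y\<^sup>T X = 1 + E\<close> makes the symmetric part of \<open>E\<close> quadratically small\<close>
  then have sym: "E + transpose E = - (transpose E ** E)"
    by (simp add: E_def transpose_diff matrix_diff_ldistrib matrix_diff_rdistrib)
  have nE: "norm E = norm (X - Y)" "norm (transpose E) = norm (X - Y)"
    using oY norm_orthogonal_matrix_mult[of "transpose Y" "X - Y"]
    by (simp_all add: E_def matrix_diff_ldistrib orthogonal_matrix_def norm_transpose)
  have "(norm (E - transpose E))^2 + (norm (E + transpose E))^2
      = 2 * (norm E)^2 + 2 * (norm (transpose E))^2"
    by (simp add: power2_norm_eq_inner inner_diff_left inner_diff_right inner_add_left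
        inner_add_right inner_commute)
  moreover have "norm (E + transpose E) \<le> (norm (X - Y))^2"
    using norm_matrix_mult_le[of "transpose E" E] nE by (simp add: sym power2_eq_square)
  then have "(norm (E + transpose E))^2 \<le> ((norm (X - Y))^2)^2"
    by (rule power_mono) simp
  then have "(norm (E + transpose E))^2 \<le> (norm (X - Y))^4"
    by (simp flip: power_mult)
  moreover have "transpose Y ** X - transpose X ** Y = E - transpose E"
    by (simp add: E_def transpose_diff matrix_transpose_mul)
  ultimately show ?thesis
    using nE by simp
qed

lemma pair_coupling_estimate:
  fixes r z w y ci cj :: real
  assumes "0 \<le> r" "r \<le> 1/5" "0 \<le> z" "4 * r^2 - r^4 \<le> z^2"
    and "\<bar>w\<bar> \<le> r^2 * z" "\<bar>y\<bar> \<le> z * r" "49/50 \<le> cj" "\<bar>cj - ci\<bar> \<le> 3/50"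
  shows "r^2 \<le> cj * (z^2/2 + w) + (cj - ci) * y"
proof -
  have "r^2 \<le> (1/5)^2"
    using assms(1,2) by (intro power_mono)
  then have "r^2 * r^2 \<le> r^2 * (1/25)"
    by (intro mult_left_mono) (auto simp: power2_eq_square)
  then have "r^4 \<le> r^2 / 25"
    by (simp add: power4_eq_xxxx power2_eq_square)
  moreover have "(99/50 * r)^2 = 9801/2500 * r^2" "0 \<le> r^2"
    by (simp_all add: power2_eq_square)
  ultimately have "(99/50 * r)^2 \<le> z^2"
    using assms(4) by linarith
  then have z: "99/50 * r \<le> z"
    using assms(1,3) by (meson power2_le_imp_le)
  have "r^2 \<le> r / 5"
    using mult_left_mono[OF assms(2,1)] by (simp add: power2_eq_square)
  then have "z * (79/100 * r) \<le> z * (z/2 - r^2)"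
    using z assms(3) by (intro mult_left_mono) auto
  also have "\<dots> \<le> z^2/2 + w"
    using assms(5) by (simp add: power2_eq_square algebra_simps abs_le_iff)
  finally have "49/50 * (z * (79/100 * r)) \<le> cj * (z^2/2 + w)"
    using assms(1,3,7) by (intro mult_mono) auto
  moreover have "\<bar>(cj - ci) * y\<bar> \<le> 3/50 * (z * r)"
    unfolding abs_mult using assms(6,8) by (intro mult_mono) auto
  then have "- (3/50 * (z * r)) \<le> (cj - ci) * y"
    by linarith
  moreover have "r^2 \<le> 3571/5000 * (z * r)"
  proof -
    have "99/50 * r * r \<le> z * r" "0 \<le> r * r"
      using mult_right_mono[OF z assms(1)] assms(1) by simp_all
    then show ?thesis
      unfolding power2_eq_square by linarith
  qed
  ultimately show ?thesis
    by linarith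
qed

lemma pair_coupling_lower:
  fixes Xi Xj Xk :: "real^'n^'n"
  assumes oi: "orthogonal_matrix Xi" and oj: "orthogonal_matrix Xj"
    and near: "norm (Xk - Xi) \<le> norm (Xi - Xj)" and small: "norm (Xi - Xj) \<le> 1/5"
    and cj: "49/50 \<le> cj" and cji: "\<bar>cj - ci\<bar> \<le> 3/50"
  shows "(norm (Xi - Xj))^2 \<le> cj * inner Xi (tangent_drift Xj Xk) + ci * inner Xj (tangent_drift Xi Xk)"
proof -
  define S where "S = transpose Xj ** Xi - transpose Xi ** Xj"
  define r where "r = norm (Xi - Xj)"
  define z where "z = norm S"
  define w where "w = inner ((Xj - Xi) ** S) (Xk - Xi)"
  define y where "y = inner (Xi ** S) (Xk - Xi)"
  have yi: "inner (Xi ** S) Xk = y"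
    using inner_skew_times_orthogonal_self[OF oi, of Xj] by (simp add: y_def S_def inner_diff_right)
  have "inner ((Xj - Xi) ** S) Xi = z^2 / 2"
    using inner_skew_times_orthogonal_self[OF oi, of Xj] inner_skew_times_orthogonal_other[OF oj, of Xi]
    by (simp add: matrix_diff_rdistrib inner_diff_left S_def z_def)
  then have yj: "inner (Xj ** S) Xk = z^2 / 2 + w + y"
    using yi by (simp add: w_def matrix_diff_rdistrib inner_diff_left inner_diff_right)
  have "inner Xi (tangent_drift Xj Xk) = inner (Xj ** S) Xk"
    using inner_tangent_drift[OF oj, of Xi Xk] by (simp add: S_def)
  moreover have "inner Xj (tangent_drift Xi Xk) = - inner (Xi ** S) Xk"
    using inner_tangent_drift[OF oi, of Xj Xk]
    by (simp add: S_def matrix_diff_ldistrib inner_diff_left)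
  \<comment> \<open>\<open>z \<approx> 2r\<close> dominates, while \<open>w\<close>, \<open>y\<close> are small because \<open>Xk\<close> is within \<open>r\<close> of \<open>Xi\<close>\<close>
  ultimately have eq: "cj * inner Xi (tangent_drift Xj Xk) + ci * inner Xj (tangent_drift Xi Xk)
      = cj * (z^2 / 2 + w) + (cj - ci) * y"
    using yi yj by (simp add: algebra_simps)
  have "\<bar>w\<bar> \<le> norm (Xk - Xi) * norm (Xj - Xi) * z"
    using abs_inner_matrix_mult_le[of "Xk - Xi" "Xj - Xi" S] by (simp add: w_def z_def inner_commute)
  also have "\<dots> \<le> r^2 * z"
    using near by (simp add: r_def z_def norm_minus_commute power2_eq_square mult_right_mono)
  finally have "\<bar>w\<bar> \<le> r^2 * z" .
  moreover have "\<bar>y\<bar> \<le> z * r"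
    using Cauchy_Schwarz_ineq2[of "Xi ** S" "Xk - Xi"] near
    by (simp add: y_def z_def r_def norm_orthogonal_matrix_mult[OF oi] mult_left_mono order_trans)
  moreover have "4 * r^2 - r^4 \<le> z^2"
    using norm_skew_part_lower[OF oi oj] by (simp add: r_def z_def S_def)
  ultimately show ?thesis
    unfolding eq using small cj cji by (intro pair_coupling_estimate) (auto simp: r_def z_def)
qed

lemma coupling_weight_bounds:
  fixes Y :: "'k \<Rightarrow> real^'m^'m"
  assumes orth: "\<And>k. orthogonal_matrix (Y k)" and small: "\<And>k l. norm (Y k - Y l) \<le> 1/5"
  shows "49/50 \<le> inner (Y j) (Y k)" and "\<bar>inner (Y j) (Y k) - inner (Y i) (Y k)\<bar> \<le> 3/50"
proof -
  have sq: "(norm (Y a - Y b))^2 \<le> 1/25" for a b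
    using power_mono[OF small[of a b] norm_ge_zero, of 2] by (simp add: power2_eq_square)
  show "49/50 \<le> inner (Y j) (Y k)"
  proof -
    have "1 \<le> real CARD('m)"
      by simp
    then show ?thesis
      using inner_orthogonal_matrices[OF orth orth, of j k] sq[of j k] by linarith
  qed
  have "inner (Y j) (Y k) - inner (Y i) (Y k) = inner (Y j - Y i) (Y k - Y i) - (norm (Y j - Y i))^2 / 2"
    using inner_orthogonal_matrices[OF orth orth, of j i] orthogonal_matrix_inner_self[OF orth, of i]
    by (simp add: inner_diff_left inner_diff_right)
  moreover have "\<bar>inner (Y j - Y i) (Y k - Y i)\<bar> \<le> 1/5 * (1/5)"
    using Cauchy_Schwarz_ineq2[of "Y j - Y i" "Y k - Y i"] mult_mono[OF small[of j i] small[of k i]]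
    by simp
  ultimately show "\<bar>inner (Y j) (Y k) - inner (Y i) (Y k)\<bar> \<le> 3/50"
    using sq[of j i] zero_le_power2[of "norm (Y j - Y i)"] by (simp only: abs_le_iff) linarith
qed

lemma inner_sync_field_diff_le:
  fixes X :: "'k::finite \<Rightarrow> real^'n^'n" and Y :: "'k \<Rightarrow> real^'m^'m"
  assumes oX: "\<And>k. orthogonal_matrix (X k)" and oY: "\<And>k. orthogonal_matrix (Y k)"
    and "0 \<le> \<kappa>"
    and widest: "\<And>k. norm (X k - X i) \<le> norm (X i - X j)" and "norm (X i - X j) \<le> 1/5"
    and "\<And>k l. norm (Y k - Y l) \<le> 1/5"
  shows "inner (X i - X j) (sync_field \<kappa> X Y i - sync_field \<kappa> X Y j) \<le> - \<kappa> * (norm (X i - X j))^2"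
proof -
  let ?F = "sync_field \<kappa> X Y" and ?N = "real CARD('k)"
  have self: "inner (X p) (?F p) = 0" for p
    by (simp add: sync_field_def inner_sum_right inner_tangent_drift_self[OF oX])
  have "?N * (norm (X i - X j))^2 = (\<Sum>k\<in>(UNIV::'k set). (norm (X i - X j))^2)"
    by simp
  also have "\<dots> \<le> (\<Sum>k\<in>UNIV. inner (Y j) (Y k) * inner (X i) (tangent_drift (X j) (X k))
                            + inner (Y i) (Y k) * inner (X j) (tangent_drift (X i) (X k)))"
    using assms by (intro sum_mono pair_coupling_lower coupling_weight_bounds[OF oY]) auto
  finally have "(\<kappa> / ?N) * (?N * (norm (X i - X j))^2) \<le> (\<kappa> / ?N) * (\<Sum>k\<in>UNIV.
      inner (Y j) (Y k) * inner (X i) (tangent_drift (X j) (X k))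
      + inner (Y i) (Y k) * inner (X j) (tangent_drift (X i) (X k)))"
    using \<open>0 \<le> \<kappa>\<close> by (intro mult_left_mono) auto
  then have "\<kappa> * (norm (X i - X j))^2 \<le> inner (X i) (?F j) + inner (X j) (?F i)"
    by (simp add: sync_field_def inner_sum_right sum.distrib distrib_left)
  then show ?thesis
    using self[of i] self[of j] by (simp add: inner_diff_left inner_diff_right)
qed

section \<open>Invariance of orthogonality\<close>

lemma bounded_bilinear_matrix_mult:
  "bounded_bilinear (\<lambda>(A::real^'n^'m) (B::real^'p^'n). A ** B)"
  unfolding bilinear_conv_bounded_bilinear[symmetric] bilinear_def
  by (auto intro!: linearI simp: matrix_add_ldistrib matrix_add_rdistrib matrix_scaleR_right
      matrix_scaleR_left)

lemma bounded_linear_transpose: "bounded_linear (transpose :: real^'n^'m \<Rightarrow> real^'m^'n)"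
  by (auto intro!: bounded_linearI' simp: transpose_add transpose_scalar)

lemma has_vector_derivative_transpose:
  fixes f :: "real \<Rightarrow> real^'n^'m"
  shows "(f has_vector_derivative f') F \<Longrightarrow> ((\<lambda>t. transpose (f t)) has_vector_derivative transpose f') F"
  by (rule bounded_linear.has_vector_derivative[OF bounded_linear_transpose])

lemma has_vector_derivative_matrix_mult:
  fixes f :: "real \<Rightarrow> real^'n^'m" and g :: "real \<Rightarrow> real^'p^'n"
  shows "(f has_vector_derivative f') (at t within S) \<Longrightarrow> (g has_vector_derivative g') (at t within S) \<Longrightarrow>
    ((\<lambda>s. f s ** g s) has_vector_derivative (f t ** g' + f' ** g t)) (at t within S)"
  using bounded_bilinear.has_vector_derivative[OF bounded_bilinear_matrix_mult] by blast

lemma has_real_derivative_inner_self: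
  fixes f :: "real \<Rightarrow> 'a::real_inner"
  assumes "(f has_vector_derivative f') (at t within S)"
  shows "((\<lambda>s. inner (f s) (f s)) has_real_derivative 2 * inner (f t) f') (at t within S)"
  using bounded_bilinear.has_vector_derivative[OF bounded_bilinear_inner assms assms]
  by (simp add: has_real_derivative_iff_has_vector_derivative inner_commute)

lemma gronwall_vanishing:
  fixes f f' C :: "real \<Rightarrow> real"
  assumes der: "\<And>t. 0 \<le> t \<Longrightarrow> (f has_real_derivative f' t) (at t within {0..})"
    and nonneg: "\<And>t. 0 \<le> t \<Longrightarrow> 0 \<le> f t" and "f 0 = 0"
    and "continuous_on {0..} C" and growth: "\<And>t. 0 \<le> t \<Longrightarrow> f' t \<le> C t * f t"
    and "0 \<le> t"
  shows "f t = 0"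
proof -
  have "continuous_on {0..t} C"
    using assms(4) by (rule continuous_on_subset) auto
  then obtain x where "\<forall>y\<in>{0..t}. C y \<le> C x"
    using continuous_attains_sup[of "{0..t}" C] \<open>0 \<le> t\<close> by auto
  then obtain K where K: "\<And>s. s \<in> {0..t} \<Longrightarrow> C s \<le> K"
    by blast
  define g where "g s = exp (- (K * s)) * f s" for s
  \<comment> \<open>the integrating factor makes \<open>g\<close> non-increasing\<close>
  have dg: "(g has_real_derivative exp (- (K * s)) * (f' s - K * f s)) (at s within {0..t})"
    if "s \<in> {0..t}" for s
  proof -
    have "(f has_real_derivative f' s) (at s within {0..t})"
      using der[of s] that by (auto intro: has_field_derivative_subset)
    then show ?thesis
      unfolding g_def by (auto intro!: derivative_eq_intros simp: algebra_simps)
  qed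
  have "\<exists>x\<in>{0..t}. g t - g 0 = (\<lambda>h. exp (- (K * x)) * (f' x - K * f x) * h) (t - 0)"
    using \<open>0 \<le> t\<close> dg by (intro mvt_very_simple) (auto simp: has_field_derivative_def)
  then obtain x where x: "x \<in> {0..t}" "g t - g 0 = (t - 0) * (exp (- (K * x)) * (f' x - K * f x))"
    by (auto simp: mult.commute)
  have "f' x \<le> K * f x"
    using growth[of x] mult_right_mono[OF K[OF x(1)] nonneg[of x]] x(1) by auto
  then have "g t \<le> 0"
    using x \<open>f 0 = 0\<close> \<open>0 \<le> t\<close> by (simp add: g_def mult_nonneg_nonpos)
  then show ?thesis
    using nonneg[OF \<open>0 \<le> t\<close>] by (simp add: g_def mult_le_0_iff)
qed

lemma gram_derivative_tangent_drift:
  fixes X W :: "real^'n^'n"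
  shows "transpose X ** tangent_drift X W + transpose (tangent_drift X W) ** X
    = - ((transpose X ** X - mat 1) ** (transpose W ** X)
         + transpose (transpose W ** X) ** (transpose X ** X - mat 1))"
  by (simp add: tangent_drift_def matrix_diff_ldistrib matrix_diff_rdistrib transpose_diff
      matrix_transpose_mul matrix_mul_assoc algebra_simps)

lemma inner_gram_drift_le:
  fixes Q W X :: "real^'n^'n"
  defines "M \<equiv> transpose W ** X"
  shows "a * inner Q (- (Q ** M + transpose M ** Q)) \<le> 2 * \<bar>a\<bar> * (norm W * norm X) * inner Q Q"
proof -
  have "\<bar>inner Q (Q ** M + transpose M ** Q)\<bar> \<le> \<bar>inner Q (Q ** M)\<bar> + \<bar>inner Q (transpose M ** Q)\<bar>"
    by (simp add: inner_add_right abs_triangle_ineq)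
  also have "\<dots> \<le> norm Q * norm Q * norm M + norm Q * norm M * norm Q"
    using add_mono[OF abs_inner_matrix_mult_le[of Q Q M] abs_inner_matrix_mult_le[of Q "transpose M" Q]]
    by (simp only: norm_transpose)
  also have "\<dots> = 2 * norm M * inner Q Q"
    by (simp add: power2_norm_eq_inner[symmetric] power2_eq_square)
  also have "\<dots> \<le> 2 * (norm W * norm X) * inner Q Q"
    using norm_matrix_mult_le[of "transpose W" X]
    by (intro mult_right_mono mult_left_mono) (simp_all add: M_def norm_transpose)
  finally have "\<bar>a\<bar> * \<bar>inner Q (Q ** M + transpose M ** Q)\<bar> \<le> \<bar>a\<bar> * (2 * (norm W * norm X) * inner Q Q)"
    by (rule mult_left_mono) simp
  moreover have "a * inner Q (- (Q ** M + transpose M ** Q)) \<le> \<bar>a\<bar> * \<bar>inner Q (Q ** M + transpose M ** Q)\<bar>"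
    unfolding inner_minus_right mult_minus_right abs_mult[symmetric] by (rule abs_ge_minus_self)
  ultimately show ?thesis
    by (simp add: mult_ac)
qed

lemma orthogonal_matrix_invariant:
  fixes X :: "real \<Rightarrow> real^'n^'n" and W :: "'k::finite \<Rightarrow> real \<Rightarrow> real^'n^'n"
    and a :: "'k \<Rightarrow> real \<Rightarrow> real"
  assumes der: "\<And>t. 0 \<le> t \<Longrightarrow> (X has_vector_derivative
        (\<Sum>k\<in>UNIV. a k t *\<^sub>R tangent_drift (X t) (W k t))) (at t within {0..})"
    and "\<And>k. continuous_on {0..} (W k)" and "\<And>k. continuous_on {0..} (a k)"
    and "orthogonal_matrix (X 0)" and "0 \<le> t"
  shows "orthogonal_matrix (X t)"
proof -
  define Q where "Q s = transpose (X s) ** X s - mat 1" for s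
  define M where "M k s = transpose (W k s) ** X s" for k s
  define Q' where "Q' s = (\<Sum>k\<in>UNIV. a k s *\<^sub>R - (Q s ** M k s + transpose (M k s) ** Q s))" for s
  define C where "C s = 4 * (\<Sum>k\<in>UNIV. \<bar>a k s\<bar> * (norm (W k s) * norm (X s)))" for s
  have "(Q has_vector_derivative Q' s) (at s within {0..})" if "0 \<le> s" for s
  proof -
    have "((\<lambda>s. transpose (X s) ** X s - mat 1) has_vector_derivative
        transpose (X s) ** (\<Sum>k\<in>UNIV. a k s *\<^sub>R tangent_drift (X s) (W k s))
        + transpose (\<Sum>k\<in>UNIV. a k s *\<^sub>R tangent_drift (X s) (W k s)) ** X s - 0) (at s within {0..})"
      using der[OF that] by (intro has_vector_derivative_diff has_vector_derivative_matrix_mult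
          has_vector_derivative_transpose has_vector_derivative_const)
    then show ?thesis
      unfolding Q_def[abs_def]
      by (simp add: Q_def Q'_def M_def matrix_sum_ldistrib matrix_sum_rdistrib transpose_sum
          transpose_scalar matrix_scaleR_right matrix_scaleR_left gram_derivative_tangent_drift
          flip: sum.distrib scaleR_add_right)
  qed
  then have dQ: "((\<lambda>s. inner (Q s) (Q s)) has_real_derivative 2 * inner (Q s) (Q' s)) (at s within {0..})"
    if "0 \<le> s" for s
    using that by (intro has_real_derivative_inner_self)
  have growth: "2 * inner (Q s) (Q' s) \<le> C s * inner (Q s) (Q s)" for s
  proof -
    have "2 * inner (Q s) (Q' s)
        \<le> 2 * (\<Sum>k\<in>UNIV. 2 * \<bar>a k s\<bar> * (norm (W k s) * norm (X s)) * inner (Q s) (Q s))"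
      unfolding Q'_def M_def inner_sum_right inner_scaleR_right
      by (intro mult_left_mono sum_mono inner_gram_drift_le) simp
    also have "\<dots> = C s * inner (Q s) (Q s)"
      by (simp add: C_def sum_distrib_left sum_distrib_right mult_ac)
    finally show ?thesis .
  qed
  have "continuous_on {0..} X"
    using der by (intro continuous_on_vector_derivative) auto
  then have "continuous_on {0..} C"
    unfolding C_def using assms(2,3) by (intro continuous_intros)
  from gronwall_vanishing[where f = "\<lambda>s. inner (Q s) (Q s)", OF dQ _ _ this growth \<open>0 \<le> t\<close>]
  have "inner (Q t) (Q t) = 0"
    using \<open>orthogonal_matrix (X 0)\<close> by (simp add: Q_def orthogonal_matrix)
  then show ?thesis
    by (simp add: Q_def orthogonal_matrix)
qed

section \<open>A first-crossing comparison principle\<close>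

lemma deriv_nonneg_if_neg_before:
  fixes \<phi> :: "real \<Rightarrow> real"
  assumes "(\<phi> has_real_derivative D) (at t within {0..})" and "0 < t"
    and "0 \<le> \<phi> t" and neg: "\<And>s. 0 \<le> s \<Longrightarrow> s < t \<Longrightarrow> \<phi> s < 0"
  shows "0 \<le> D"
proof -
  have "(\<phi> has_real_derivative D) (at t within {0..t})"
    using assms(1) by (rule has_field_derivative_subset) auto
  then have "((\<lambda>s. (\<phi> s - \<phi> t) / (s - t)) \<longlongrightarrow> D) (at_left t)"
    using at_within_Icc_at_left[OF \<open>0 < t\<close>] by (simp add: has_field_derivative_iff)
  moreover have "eventually (\<lambda>s. 0 \<le> (\<phi> s - \<phi> t) / (s - t)) (at_left t)"
    using eventually_at_left_real[OF \<open>0 < t\<close>]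
  proof eventually_elim
    case (elim s)
    then have "\<phi> s - \<phi> t \<le> 0"
      using neg[of s] \<open>0 \<le> \<phi> t\<close> by simp
    then show ?case
      using elim by (simp add: divide_nonpos_neg)
  qed
  ultimately show ?thesis
    by (rule tendsto_lowerbound) simp
qed

lemma first_crossing:
  fixes g :: "'p::finite \<Rightarrow> real \<Rightarrow> real"
  assumes cont: "\<And>q. continuous_on {0..} (g q)" and init: "\<And>q. g q 0 < 0"
    and "0 \<le> s" and "0 \<le> g p s"
  obtains t p where "0 < t" "0 \<le> g p t" "\<And>q. g q t \<le> 0" "\<And>q s. 0 \<le> s \<Longrightarrow> s < t \<Longrightarrow> g q s < 0"
proof -
  define S where "S = (\<Union>q. {s \<in> {0..}. 0 \<le> g q s})"
  have "S \<noteq> {}" "bdd_below S"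
    using assms(3,4) by (auto simp: S_def intro!: bdd_belowI[of _ 0])
  moreover have "closed S"
    unfolding S_def by (intro closed_UN ballI continuous_on_closed_Collect_le cont) auto
  ultimately have "Inf S \<in> S"
    by (rule closed_contains_Inf)
  then obtain p where p: "0 \<le> Inf S" "0 \<le> g p (Inf S)"
    by (auto simp: S_def)
  have before: "g q s < 0" if "0 \<le> s" "s < Inf S" for q s
  proof (rule ccontr)
    assume "\<not> g q s < 0"
    then have "s \<in> S"
      using that(1) by (auto simp: S_def not_less)
    then show False
      using cInf_lower[OF _ \<open>bdd_below S\<close>, of s] that(2) by simp
  qed
  have "Inf S \<noteq> 0"
    using p init[of p] by auto
  then have "0 < Inf S"
    using p(1) by simp
  moreover have "g q (Inf S) \<le> 0" for q
  proof -
    have "(g q \<longlongrightarrow> g q (Inf S)) (at (Inf S) within {0..Inf S})"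
      using cont[of q] p(1)
      by (intro tendsto_within_subset[OF continuous_on_def[THEN iffD1, rule_format]]) auto
    then have "(g q \<longlongrightarrow> g q (Inf S)) (at_left (Inf S))"
      using at_within_Icc_at_left[OF \<open>0 < Inf S\<close>] by simp
    moreover have "eventually (\<lambda>s. g q s \<le> 0) (at_left (Inf S))"
      using eventually_at_left_real[OF \<open>0 < Inf S\<close>] by eventually_elim (auto intro: less_imp_le before)
    ultimately show ?thesis
      by (rule tendsto_upperbound) simp
  qed
  ultimately show ?thesis
    using that p(2) before by blast
qed

lemma finite_family_stays_below:
  fixes h h' :: "'p::finite \<Rightarrow> real \<Rightarrow> real"
  assumes der: "\<And>p t. 0 \<le> t \<Longrightarrow> (h p has_real_derivative h' p t) (at t within {0..})"
    and init: "\<And>p. h p 0 < B"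
    and at_max: "\<And>p t. 0 < t \<Longrightarrow> (\<And>q. h q t \<le> B) \<Longrightarrow> (\<And>q. h q t \<le> h p t) \<Longrightarrow> h' p t \<le> 0"
    and "0 \<le> t"
  shows "h p t < B"
proof -
  define M where "M = Max (range (\<lambda>q. h q 0))"
  have "M < B" and hM: "\<And>q. h q 0 \<le> M"
    using init by (auto simp: M_def)
  define \<epsilon> where "\<epsilon> = (B - M) / 2"
  have "0 < \<epsilon>"
    using \<open>M < B\<close> by (simp add: \<epsilon>_def)
  \<comment> \<open>the barrier rises strictly, which turns the weak inequality at a maximum into a contradiction\<close>
  define b where "b s = B - \<epsilon> * exp (- s)" for s
  have db: "(b has_real_derivative \<epsilon> * exp (- s)) (at s within {0..})" for s
    unfolding b_def by (auto intro!: derivative_eq_intros)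
  have bB: "b s < B" for s
    using \<open>0 < \<epsilon>\<close> by (simp add: b_def)
  have cont: "continuous_on {0..} (\<lambda>s. h q s - b s)" for q
    unfolding continuous_on_eq_continuous_within
    by (intro ballI continuous_diff DERIV_continuous[OF der] DERIV_continuous[OF db]) simp
  have below0: "h q 0 - b 0 < 0" for q
    using hM[of q] \<open>M < B\<close> by (simp add: b_def \<epsilon>_def field_simps)
  have "h q s < b s" if "0 \<le> s" for q s
  proof (rule ccontr)
    assume "\<not> h q s < b s"
    then have "0 \<le> h q s - b s"
      by simp
    then obtain t p where t: "0 < t" "0 \<le> h p t - b t" "\<And>q. h q t - b t \<le> 0"
      and before: "\<And>q s. 0 \<le> s \<Longrightarrow> s < t \<Longrightarrow> h q s - b s < 0"
      by (rule first_crossing[of "\<lambda>q s. h q s - b s", OF cont below0 \<open>0 \<le> s\<close>]) blast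
    have "h' p t \<le> 0"
    proof (rule at_max[OF t(1)])
      show "h r t \<le> B" for r
        using t(3)[of r] bB[of t] by linarith
      show "h r t \<le> h p t" for r
        using t(2) t(3)[of r] by linarith
    qed
    moreover have "0 \<le> h' p t - \<epsilon> * exp (- t)"
      by (rule deriv_nonneg_if_neg_before[OF DERIV_diff[OF der db] t(1) t(2) before]) (use t(1) in simp)
    moreover have "0 < \<epsilon> * exp (- t)"
      using \<open>0 < \<epsilon>\<close> by simp
    ultimately show False
      by linarith
  qed
  then show ?thesis
    using \<open>0 \<le> t\<close> bB less_trans by blast
qed

lemma DSOM_solution_iff:
  "DSOM_solution \<kappa> U V \<longleftrightarrow> (\<forall>j. \<forall>t\<ge>0.
     (U j has_vector_derivative sync_field \<kappa> (\<lambda>k. U k t) (\<lambda>k. V k t) j) (at t within {0..}) \<and>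
     (V j has_vector_derivative sync_field \<kappa> (\<lambda>k. V k t) (\<lambda>k. U k t) j) (at t within {0..}))"
  by (simp add: DSOM_solution_def sync_field_def tangent_drift_def frob_inner_eq_inner)

lemma DSOM_solution_swap: "DSOM_solution \<kappa> U V \<longleftrightarrow> DSOM_solution \<kappa> V U"
  by (auto simp: DSOM_solution_iff)

lemma DSOM_solution_continuous:
  "DSOM_solution \<kappa> U V \<Longrightarrow> continuous_on {0..} (U j)"
  by (intro continuous_on_vector_derivative) (auto simp: DSOM_solution_iff)

lemma DSOM_solution_orthogonal:
  fixes U :: "'k::finite \<Rightarrow> real \<Rightarrow> real^'n^'n" and V :: "'k \<Rightarrow> real \<Rightarrow> real^'m^'m"
  assumes sol: "DSOM_solution \<kappa> U V" and "\<And>j. orthogonal_matrix (U j 0)" and "0 \<le> t"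
  shows "orthogonal_matrix (U j t)"
proof (rule orthogonal_matrix_invariant[where W = U and a = "\<lambda>k s. \<kappa> / real CARD('k) * inner (V j s) (V k s)"])
  show "(U j has_vector_derivative (\<Sum>k\<in>UNIV. (\<kappa> / real CARD('k) * inner (V j s) (V k s)) *\<^sub>R
      tangent_drift (U j s) (U k s))) (at s within {0..})" if "0 \<le> s" for s
    using sol that by (simp add: DSOM_solution_iff sync_field_def scaleR_sum_right)
  show "continuous_on {0..} (\<lambda>s. \<kappa> / real CARD('k) * inner (V j s) (V k s))" for k
    using DSOM_solution_continuous[OF DSOM_solution_swap[THEN iffD1, OF sol]]
    by (intro continuous_intros) auto
qed (simp_all add: assms(2,3) DSOM_solution_continuous[OF sol])

definition weighted_gap :: "real \<Rightarrow> ('k \<Rightarrow> real \<Rightarrow> 'a::real_normed_vector) \<Rightarrow> 'k \<Rightarrow> 'k \<Rightarrow> real \<Rightarrow> real" where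
  "weighted_gap \<kappa> X i j t = exp (\<kappa> * t) * (norm (X i t - X j t))^2"

definition weighted_gap_rate ::
  "real \<Rightarrow> ('k::finite \<Rightarrow> real \<Rightarrow> real^'n^'n) \<Rightarrow> ('k \<Rightarrow> real \<Rightarrow> real^'m^'m) \<Rightarrow> 'k \<Rightarrow> 'k \<Rightarrow> real \<Rightarrow> real" where
  "weighted_gap_rate \<kappa> U V i j t = exp (\<kappa> * t) * (\<kappa> * (norm (U i t - U j t))^2
     + 2 * inner (U i t - U j t)
         (sync_field \<kappa> (\<lambda>k. U k t) (\<lambda>k. V k t) i - sync_field \<kappa> (\<lambda>k. U k t) (\<lambda>k. V k t) j))"

lemma weighted_gap_eq: "weighted_gap \<kappa> X i j t = (exp (\<kappa> * t / 2) * norm (X i t - X j t))^2"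
  by (simp add: weighted_gap_def power_mult_distrib flip: exp_of_nat_mult)

lemma has_real_derivative_weighted_gap:
  assumes "DSOM_solution \<kappa> U V" and "0 \<le> t"
  shows "(weighted_gap \<kappa> U i j has_real_derivative weighted_gap_rate \<kappa> U V i j t) (at t within {0..})"
proof -
  define D' where "D' = sync_field \<kappa> (\<lambda>k. U k t) (\<lambda>k. V k t) i - sync_field \<kappa> (\<lambda>k. U k t) (\<lambda>k. V k t) j"
  have "((\<lambda>s. U i s - U j s) has_vector_derivative D') (at t within {0..})"
    using assms by (auto simp: D'_def DSOM_solution_iff intro!: has_vector_derivative_diff)
  then have "((\<lambda>s. inner (U i s - U j s) (U i s - U j s)) has_real_derivative
      2 * inner (U i t - U j t) D') (at t within {0..})"
    by (rule has_real_derivative_inner_self)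
  then have "((\<lambda>s. exp (\<kappa> * s) * inner (U i s - U j s) (U i s - U j s)) has_real_derivative
      exp (\<kappa> * t) * (2 * inner (U i t - U j t) D')
      + exp (\<kappa> * t) * \<kappa> * inner (U i t - U j t) (U i t - U j t)) (at t within {0..})"
    by (auto intro!: derivative_eq_intros)
  then show ?thesis
    unfolding weighted_gap_def[abs_def] weighted_gap_rate_def power2_norm_eq_inner D'_def[symmetric]
    by (simp add: algebra_simps)
qed

lemma weighted_gap_rate_nonpos:
  fixes U :: "'k::finite \<Rightarrow> real \<Rightarrow> real^'n^'n" and V :: "'k \<Rightarrow> real \<Rightarrow> real^'m^'m"
  assumes "\<And>k. orthogonal_matrix (U k t)" "\<And>k. orthogonal_matrix (V k t)" "0 \<le> \<kappa>"
    and "\<And>k. norm (U k t - U i t) \<le> norm (U i t - U j t)" "norm (U i t - U j t) \<le> 1/5"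
    and "\<And>k l. norm (V k t - V l t) \<le> 1/5"
  shows "weighted_gap_rate \<kappa> U V i j t \<le> 0"
proof -
  have "\<kappa> * (norm (U i t - U j t))^2 + 2 * inner (U i t - U j t)
      (sync_field \<kappa> (\<lambda>k. U k t) (\<lambda>k. V k t) i - sync_field \<kappa> (\<lambda>k. U k t) (\<lambda>k. V k t) j)
      \<le> - \<kappa> * (norm (U i t - U j t))^2"
    using inner_sync_field_diff_le[of "\<lambda>k. U k t" "\<lambda>k. V k t" \<kappa> i j] assms by simp
  also have "\<dots> \<le> 0"
    using \<open>0 \<le> \<kappa>\<close> by simp
  finally show ?thesis
    by (simp add: weighted_gap_rate_def mult_nonneg_nonpos)
qed

lemma norm_le_if_weighted_gap_le:
  "weighted_gap \<kappa> X k l t \<le> weighted_gap \<kappa> X i j t \<Longrightarrow> norm (X k t - X l t) \<le> norm (X i t - X j t)"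
  unfolding weighted_gap_def by (simp add: power2_le_iff_abs_le)

lemma norm_le_if_weighted_gap_le_square:
  assumes "weighted_gap \<kappa> X i j t \<le> c^2" "0 \<le> c"
  shows "norm (X i t - X j t) \<le> exp (- (\<kappa> * t / 2)) * c"
proof -
  have "exp (\<kappa> * t / 2) * norm (X i t - X j t) \<le> c"
    using assms by (simp add: weighted_gap_eq power2_le_iff_abs_le)
  then show ?thesis
    by (simp add: exp_minus field_simps)
qed

lemma weighted_gap_rate_nonpos_at_widest:
  fixes U :: "'k::finite \<Rightarrow> real \<Rightarrow> real^'n^'n" and V :: "'k \<Rightarrow> real \<Rightarrow> real^'m^'m"
  assumes sol: "DSOM_solution \<kappa> U V" and "0 \<le> \<kappa>" and "0 \<le> t"
    and "\<And>j. orthogonal_matrix (U j 0)" and "\<And>j. orthogonal_matrix (V j 0)"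
    and widest: "\<And>k. weighted_gap \<kappa> U k i t \<le> weighted_gap \<kappa> U i j t"
    and belowU: "\<And>k l. weighted_gap \<kappa> U k l t \<le> (1/5)^2"
    and belowV: "\<And>k l. weighted_gap \<kappa> V k l t \<le> (1/5)^2"
  shows "weighted_gap_rate \<kappa> U V i j t \<le> 0"
proof (rule weighted_gap_rate_nonpos)
  have "exp (- (\<kappa> * t / 2)) * (1/5) \<le> 1/5"
    using \<open>0 \<le> \<kappa>\<close> \<open>0 \<le> t\<close> by simp
  then show "norm (U i t - U j t) \<le> 1/5" "norm (V k t - V l t) \<le> 1/5" for k l
    using norm_le_if_weighted_gap_le_square[OF belowU] norm_le_if_weighted_gap_le_square[OF belowV]
    by (meson order_trans zero_le_divide_1_iff zero_le_numeral)+
  show "orthogonal_matrix (U k t)" "orthogonal_matrix (V k t)" for k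
    using DSOM_solution_orthogonal[OF sol] DSOM_solution_orthogonal[OF DSOM_solution_swap[THEN iffD1, OF sol]]
      assms(3-5) by auto
qed (use norm_le_if_weighted_gap_le[OF widest] \<open>0 \<le> \<kappa>\<close> in auto)

lemma DSOM_gaps_decay:
  fixes U :: "'k::finite \<Rightarrow> real \<Rightarrow> real^'n^'n" and V :: "'k \<Rightarrow> real \<Rightarrow> real^'m^'m"
  assumes sol: "DSOM_solution \<kappa> U V" and "0 \<le> \<kappa>"
    and orthU: "\<And>j. orthogonal_matrix (U j 0)" and orthV: "\<And>j. orthogonal_matrix (V j 0)"
    and smallU: "\<And>i j. norm (U i 0 - U j 0) < 1/5" and smallV: "\<And>i j. norm (V i 0 - V j 0) < 1/5"
    and "0 \<le> t"
  shows "norm (U i t - U j t) \<le> exp (- (\<kappa> * t / 2)) / 5"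
proof -
  have sol': "DSOM_solution \<kappa> V U"
    using sol DSOM_solution_swap by blast
  \<comment> \<open>one joint family, since a widest pair of either configuration needs both configurations small\<close>
  define h where "h = (\<lambda>(b, i, j). if b then weighted_gap \<kappa> U i j else weighted_gap \<kappa> V i j)"
  define h' where "h' = (\<lambda>(b, i, j). if b then weighted_gap_rate \<kappa> U V i j else weighted_gap_rate \<kappa> V U i j)"
  have "h (True, i, j) t < (1/5)^2"
  proof (rule finite_family_stays_below[OF _ _ _ \<open>0 \<le> t\<close>])
    show "(h p has_real_derivative h' p s) (at s within {0..})" if "0 \<le> s" for p s
      using has_real_derivative_weighted_gap[OF sol that] has_real_derivative_weighted_gap[OF sol' that]
      by (auto simp: h_def h'_def split: prod.splits)
    show "h p 0 < (1/5)^2" for p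
      using power_strict_mono[OF smallU norm_ge_zero, of 2] power_strict_mono[OF smallV norm_ge_zero, of 2]
      by (auto simp: h_def weighted_gap_def split: prod.splits)
    show "h' p s \<le> 0" if "0 < s" and below: "\<And>q. h q s \<le> (1/5)^2" and widest: "\<And>q. h q s \<le> h p s"
      for p s
    proof -
      obtain b i j where p: "p = (b, i, j)"
        by (cases p)
      have "weighted_gap \<kappa> U k l s \<le> (1/5)^2" "weighted_gap \<kappa> V k l s \<le> (1/5)^2" for k l
        using below[of "(True, k, l)"] below[of "(False, k, l)"] by (simp_all add: h_def)
      moreover have "weighted_gap \<kappa> U k i s \<le> weighted_gap \<kappa> U i j s" if b for k
        using widest[of "(True, k, i)"] that by (simp add: h_def p)
      moreover have "weighted_gap \<kappa> V k i s \<le> weighted_gap \<kappa> V i j s" if "\<not> b" for k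
        using widest[of "(False, k, i)"] that by (simp add: h_def p)
      ultimately show ?thesis
        using weighted_gap_rate_nonpos_at_widest[OF sol \<open>0 \<le> \<kappa>\<close> _ orthU orthV]
          weighted_gap_rate_nonpos_at_widest[OF sol' \<open>0 \<le> \<kappa>\<close> _ orthV orthU] \<open>0 < s\<close>
        by (cases b) (simp_all add: h'_def p)
    qed
  qed
  then show ?thesis
    using norm_le_if_weighted_gap_le_square[of \<kappa> U i j t "1/5"] by (simp add: h_def)
qed

lemma finite_pairs_image: "finite {f i j | i j. True}" for f :: "'k::finite \<Rightarrow> 'k \<Rightarrow> 'b"
proof -
  have "{f i j | i j. True} = case_prod f ` UNIV"
    by auto
  then show ?thesis
    by simp
qed

lemma norm_diff_le_diamD: "norm (X i - X j) \<le> diamD X"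
  unfolding diamD_def frob_norm_eq_norm by (rule Max_ge[OF finite_pairs_image]) auto

lemma diamD_le: "(\<And>i j. norm (X i - X j) \<le> d) \<Longrightarrow> diamD X \<le> d"
  unfolding diamD_def frob_norm_eq_norm by (subst Max_le_iff[OF finite_pairs_image]) auto

lemma diamD_nonneg: "0 \<le> diamD X"
  using order_trans[OF norm_ge_zero norm_diff_le_diamD] .

lemma devS_nonneg: "0 \<le> devS X"
  unfolding devS_def by (rule order_trans[OF abs_ge_zero Max_ge[OF finite_pairs_image]]) auto

lemma devS_le:
  fixes X :: "'k::finite \<Rightarrow> real^'n^'n"
  assumes "\<And>j. orthogonal_matrix (X j)" and "\<And>i j. norm (X i - X j) \<le> d"
  shows "devS X \<le> d^2 / 2"
  unfolding devS_def frob_inner_eq_inner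
proof (subst Max_le_iff[OF finite_pairs_image], safe)
  fix i j
  have "(norm (X i - X j))^2 \<le> d^2"
    using assms(2) by (intro power_mono) (auto intro: order_trans[OF norm_ge_zero])
  then show "\<bar>real CARD('n) - inner (X i) (X j)\<bar> \<le> d^2 / 2"
    using inner_orthogonal_matrices[OF assms(1) assms(1), of i j] by simp
qed auto

lemma alpha_mn_less:
  assumes "1 \<le> m" and "m \<le> (n::real)"
  shows "alpha_mn m n < 1/5"
proof -
  define A where "A = 12 * n + 27"
  define c where "c = 4/5 * (4 * n + 3)"
  have "24 * m * (3 * n + 4) \<le> 24 * n * (3 * n + 4)"
    using assms by (intro mult_right_mono) auto
  moreover have "(A + c)^2 - A^2 - 24 * n * (3 * n + 4) = 376/25 * n^2 + 3744/25 * n + 3384/25"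
    by (simp add: A_def c_def power2_eq_square algebra_simps)
  ultimately have "A^2 + 24 * m * (3 * n + 4) < (A + c)^2"
    using assms zero_le_power2[of n] by linarith
  moreover have "0 < A + c"
    using assms by (simp add: A_def c_def field_simps)
  ultimately have "sqrt (A^2 + 24 * m * (3 * n + 4)) - A < c"
    using real_sqrt_less_mono[of "A^2 + 24 * m * (3 * n + 4)" "(A + c)^2"] by simp
  moreover have "0 < 4 * (4 * n + 3)"
    using assms by simp
  ultimately have "alpha_mn m n < c / (4 * (4 * n + 3))"
    by (simp add: alpha_mn_def A_def divide_strict_right_mono)
  also have "\<dots> = 1/5"
    using assms by (simp add: c_def)
  finally show ?thesis .
qed

lemma lyapL_nonneg: "0 \<le> lyapL U V t"
  by (simp add: lyapL_def diamD_nonneg devS_nonneg)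

lemma norm_diff_lt_if_lyapL_lt:
  assumes "lyapL U V t < c"
  shows "norm (U i t - U j t) < c" and "norm (V i t - V j t) < c"
  using assms norm_diff_le_diamD[of "\<lambda>j. U j t" i j] norm_diff_le_diamD[of "\<lambda>j. V j t" i j]
    diamD_nonneg[of "\<lambda>j. U j t"] diamD_nonneg[of "\<lambda>j. V j t"]
    devS_nonneg[of "\<lambda>j. U j t"] devS_nonneg[of "\<lambda>j. V j t"]
  by (simp_all add: lyapL_def)

lemma lyapL_le_if_gaps_le:
  fixes U :: "'k::finite \<Rightarrow> real \<Rightarrow> real^'n^'n" and V :: "'k \<Rightarrow> real \<Rightarrow> real^'m^'m"
  assumes "\<And>j. orthogonal_matrix (U j t)" "\<And>j. orthogonal_matrix (V j t)"
    and "\<And>i j. norm (U i t - U j t) \<le> d" "\<And>i j. norm (V i t - V j t) \<le> d"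
  shows "lyapL U V t \<le> 2 * d + d^2"
proof -
  have "devS (\<lambda>j. U j t) \<le> d^2 / 2" "devS (\<lambda>j. V j t) \<le> d^2 / 2"
    using devS_le[of "\<lambda>j. U j t", OF assms(1,3)] devS_le[of "\<lambda>j. V j t", OF assms(2,4)] by simp_all
  moreover have "diamD (\<lambda>j. U j t) \<le> d" "diamD (\<lambda>j. V j t) \<le> d"
    using diamD_le[of "\<lambda>j. U j t", OF assms(3)] diamD_le[of "\<lambda>j. V j t", OF assms(4)] by simp_all
  ultimately show ?thesis
    unfolding lyapL_def by linarith
qed

lemma tendsto_exp_neg_mult_at_top:
  assumes "0 < (c::real)"
  shows "((\<lambda>t. exp (- (c * t))) \<longlongrightarrow> 0) at_top"
proof -
  have "filterlim (\<lambda>t. c * t) at_top at_top"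
    using assms by (intro filterlim_tendsto_pos_mult_at_top[OF tendsto_const _ filterlim_ident])
  then have "filterlim (\<lambda>t. - (c * t)) at_bot at_top"
    unfolding filterlim_uminus_at_bot minus_minus .
  then show ?thesis
    by (rule filterlim_compose[OF exp_at_bot])
qed

theorem theoremC1:
  fixes U :: "'k::finite \<Rightarrow> real \<Rightarrow> real^'n::finite^'n"
    and V :: "'k \<Rightarrow> real \<Rightarrow> real^'m::finite^'m"
    and \<kappa> :: real
  assumes "CARD('m) \<le> CARD('n)"
    and "\<kappa> > 0"
    and "DSOM_solution \<kappa> U V"
    and "\<forall>j. SO_mat (U j 0) \<and> SO_mat (V j 0)"
    and "lyapL U V 0 < alpha_mn (real CARD('m)) (real CARD('n))"
  shows "((\<lambda>t. lyapL U V t) \<longlongrightarrow> 0) at_top"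
proof -
  have sol': "DSOM_solution \<kappa> V U"
    using assms(3) DSOM_solution_swap by blast
  have orth0: "orthogonal_matrix (U j 0)" "orthogonal_matrix (V j 0)" for j
    using assms(4) by (simp_all add: SO_mat_def)
  have "lyapL U V 0 < 1/5"
    using assms(1,5) alpha_mn_less[of "real CARD('m)" "real CARD('n)"] by simp
  note small0 = norm_diff_lt_if_lyapL_lt[OF this]
  define \<delta> where "\<delta> t = exp (- (\<kappa> / 2 * t)) / 5" for t
  have bound: "lyapL U V t \<le> 2 * \<delta> t + (\<delta> t)^2" if "0 \<le> t" for t
    using DSOM_solution_orthogonal[OF assms(3) _ that] DSOM_solution_orthogonal[OF sol' _ that]
      DSOM_gaps_decay[OF assms(3) _ orth0 small0 that] DSOM_gaps_decay[OF sol' _ orth0(2,1) small0(2,1) that]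
      assms(2) orth0 by (intro lyapL_le_if_gaps_le) (simp_all add: \<delta>_def)
  have "((\<lambda>t. exp (- (\<kappa> / 2 * t))) \<longlongrightarrow> 0) at_top"
    using assms(2) by (intro tendsto_exp_neg_mult_at_top) simp
  then have "((\<lambda>t. 2 * \<delta> t + (\<delta> t)^2) \<longlongrightarrow> 2 * (0 / 5) + (0 / 5)^2) at_top"
    unfolding \<delta>_def by (intro tendsto_intros) simp_all
  then have lim: "((\<lambda>t. 2 * \<delta> t + (\<delta> t)^2) \<longlongrightarrow> 0) at_top"
    by simp
  show ?thesis
  proof (rule tendsto_sandwich[OF _ _ tendsto_const lim])
    show "\<forall>\<^sub>F t in at_top. 0 \<le> lyapL U V t"
      by (simp add: lyapL_nonneg)
    show "\<forall>\<^sub>F t in at_top. lyapL U V t \<le> 2 * \<delta> t + (\<delta> t)^2"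
      using eventually_ge_at_top[of 0] by eventually_elim (rule bound)
  qed
qed

end
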